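(* There is an absolute constant $C>0$ such that the following holds. Let $G$ be a finite graph with $n$ vertices, and let $\epsilon>0$ satisfy $\epsilon n < n-1$. If $G$ is $\epsilon$-distance-uniform with critical distance $d$, then \[ d \le 2^{C\,\frac{\log n}{\log \epsilon^{-1}}}. \] (In the paper's notation: $d = 2^{O\left(\frac{\log n}{\log \epsilon^{-1}}\right)}$.)
   Context: For a parameter $\epsilon>0$, an $n$-vertex graph $G$ is called $\epsilon$-distance-uniform if there is a value $d$, called the critical distance, such that for every vertex $v$, all but at most $\epsilon n$ of the other vertices are at graph distance exactly $d$ from $v$. The ratio $\frac{\log n}{\log \epsilon^{-1}}$ does not depend on the base of the logarithm. *)

theory Defs
  imports Complex_Main
begin

definition is_graph :: "'a set \<Rightarrow> ('a \<Rightarrow> 'a \<Rightarrow> bool) \<Rightarrow> bool" where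
  "is_graph V E \<longleftrightarrow> finite V \<and> (\<forall>u v. E u v \<longrightarrow> u \<in> V \<and> v \<in> V)
     \<and> (\<forall>u v. E u v \<longrightarrow> E v u) \<and> (\<forall>v. \<not> E v v)"

inductive walk :: "('a \<Rightarrow> 'a \<Rightarrow> bool) \<Rightarrow> 'a \<Rightarrow> 'a \<Rightarrow> nat \<Rightarrow> bool" for E where
  walk_nil: "walk E u u 0"
| walk_step: "E u w \<Longrightarrow> walk E w v k \<Longrightarrow> walk E u v (Suc k)"

definition graph_dist_is :: "('a \<Rightarrow> 'a \<Rightarrow> bool) \<Rightarrow> 'a \<Rightarrow> 'a \<Rightarrow> nat \<Rightarrow> bool" where
  "graph_dist_is E u v d \<longleftrightarrow> walk E u v d \<and> (\<forall>k<d. \<not> walk E u v k)"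

definition distance_uniform :: "'a set \<Rightarrow> ('a \<Rightarrow> 'a \<Rightarrow> bool) \<Rightarrow> real \<Rightarrow> nat \<Rightarrow> bool" where
  "distance_uniform V E \<epsilon> d \<longleftrightarrow>
     (\<forall>v\<in>V. real (card {w \<in> V - {v}. \<not> graph_dist_is E v w d}) \<le> \<epsilon> * real (card V))"

end

theory Submission
  imports Defs
begin

text \<open>Call \<open>x\<close> far from \<open>v\<close> if their distance is exactly \<open>d\<close>, and near otherwise; every vertex
  has at most \<open>\<epsilon>n + 1\<close> near vertices. If \<open>x\<close> is far from \<open>v\<close> and \<open>z\<close> lies at distance \<open>r \<le> d\<close>
  from \<open>v\<close> on a geodesic to \<open>x\<close>, then the ball of radius \<open>r - 1\<close> around \<open>z\<close> lies in the ball of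
  radius \<open>2r - 1\<close> around \<open>v\<close> and consists of vertices near \<open>x\<close>. Double counting near pairs between
  that ball around \<open>v\<close> and the far vertices of \<open>v\<close> shows that doubling the radius multiplies the
  minimal ball size by about \<open>1/\<epsilon>\<close>, as long as the radius stays below \<open>2d\<close>. Hence
  \<open>(1/(4\<epsilon>))\<^bsup>log\<^sub>2 d\<^esup> \<le> n\<close>, i.e. \<open>d \<le> n\<^bsup>O(1/log(1/\<epsilon>))\<^esup>\<close>. When \<open>\<epsilon>n < 1\<close> all neighbours are far,
  so \<open>d \<le> 1\<close>; when \<open>\<epsilon> \<ge> 1/8\<close> the trivial bound \<open>d < n\<close> suffices.\<close>

lemma walk_append: "walk E u w a \<Longrightarrow> walk E w v b \<Longrightarrow> walk E u v (a + b)"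
  by (induction rule: walk.induct) (auto intro: walk.intros)

lemma walk_split: "walk E u v (a + b) \<Longrightarrow> \<exists>w. walk E u w a \<and> walk E w v b"
proof (induction a arbitrary: u)
  case 0
  then show ?case by (auto intro: walk.intros)
next
  case (Suc a)
  from Suc.prems obtain w where "E u w" "walk E w v (a + b)"
    by (cases rule: walk.cases) auto
  with Suc.IH obtain z where "walk E w z a" "walk E z v b" by blast
  with \<open>E u w\<close> show ?case by (auto intro: walk.intros)
qed

lemma walk_one_iff: "walk E u v 1 \<longleftrightarrow> E u v"
proof
  assume "walk E u v 1"
  then obtain w where "E u w" "walk E w v 0" by (cases rule: walk.cases) auto
  moreover from \<open>walk E w v 0\<close> have "w = v" by (cases rule: walk.cases) auto
  ultimately show "E u v" by simp
qed (auto intro: walk.intros)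

lemma walk_reverse:
  assumes sym: "\<And>u v. E u v \<Longrightarrow> E v u"
  shows "walk E u v k \<Longrightarrow> walk E v u k"
proof (induction rule: walk.induct)
  case (walk_nil u)
  show ?case by (rule walk.walk_nil)
next
  case (walk_step u w v k)
  have "walk E w u 1" using sym[OF walk_step.hyps(1)] by (simp only: walk_one_iff)
  from walk_append[OF walk_step.IH this] show ?case by simp
qed

lemma walk_in_vertices:
  assumes "is_graph V E"
  shows "walk E u v k \<Longrightarrow> u \<in> V \<Longrightarrow> v \<in> V"
  by (induction rule: walk.induct) (use assms in \<open>auto simp: is_graph_def\<close>)

lemma walk_shorter_not_graph_dist: "walk E u v k \<Longrightarrow> k < d \<Longrightarrow> \<not> graph_dist_is E u v d"
  by (auto simp: graph_dist_is_def)

lemma graph_dist_is_unique: "graph_dist_is E u v i \<Longrightarrow> graph_dist_is E u v j \<Longrightarrow> i = j"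
  by (metis graph_dist_is_def linorder_neqE_nat)

lemma graph_dist_is_pos: "graph_dist_is E u v d \<Longrightarrow> v \<noteq> u \<Longrightarrow> 1 \<le> d"
  by (cases d) (auto simp: graph_dist_is_def elim: walk.cases)

lemma graph_dist_is_split:
  assumes "graph_dist_is E u v d" "j \<le> d"
  obtains w where "graph_dist_is E u w j" "walk E w v (d - j)"
proof -
  from assms have "walk E u v (j + (d - j))" by (simp add: graph_dist_is_def)
  then obtain w where uw: "walk E u w j" and wv: "walk E w v (d - j)"
    by (blast dest: walk_split)
  have "\<not> walk E u w i" if "i < j" for i
    using walk_append[OF _ wv, of u i] that assms walk_shorter_not_graph_dist[of E u v _ d]
    by fastforce
  with uw wv show thesis using that by (auto simp: graph_dist_is_def)
qed

text \<open>The vertices at distance \<open>0, 1, \<dots>, d\<close> along a geodesic are pairwise distinct.\<close>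
lemma graph_dist_less_card:
  assumes G: "is_graph V E" and v: "v \<in> V" and vx: "graph_dist_is E v x d"
  shows "d < card V"
proof -
  have "\<forall>j. \<exists>w. j \<le> d \<longrightarrow> graph_dist_is E v w j"
    using graph_dist_is_split[OF vx] by metis
  then obtain f where f: "\<And>j. j \<le> d \<Longrightarrow> graph_dist_is E v (f j) j" by metis
  have "inj_on f {0..d}"
  proof (rule inj_onI)
    fix i j assume "i \<in> {0..d}" "j \<in> {0..d}" "f i = f j"
    then have "graph_dist_is E v (f i) i" "graph_dist_is E v (f i) j"
      using f by (metis atLeastAtMost_iff)+
    then show "i = j" by (rule graph_dist_is_unique)
  qed
  moreover have "f ` {0..d} \<subseteq> V"
    using f walk_in_vertices[OF G _ v] unfolding graph_dist_is_def by fastforce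
  moreover have "finite V" using G by (simp add: is_graph_def)
  ultimately have "card {0..d} \<le> card V" by (rule card_inj_on_le)
  then show ?thesis by simp
qed

definition graph_ball :: "'a set \<Rightarrow> ('a \<Rightarrow> 'a \<Rightarrow> bool) \<Rightarrow> 'a \<Rightarrow> nat \<Rightarrow> 'a set" where
  "graph_ball V E v r = {y \<in> V. \<exists>k\<le>r. walk E v y k}"

lemma graph_ball_subset: "graph_ball V E v r \<subseteq> V"
  by (auto simp: graph_ball_def)

lemma center_in_graph_ball: "v \<in> V \<Longrightarrow> v \<in> graph_ball V E v r"
  by (auto simp: graph_ball_def intro: walk.intros)

lemma obtain_graph_ball_subset_near:
  assumes G: "is_graph V E" and v: "v \<in> V" and vx: "graph_dist_is E v x d"
    and r: "1 \<le> r" "r \<le> d"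
  obtains z where "z \<in> V"
    "graph_ball V E z (r - 1) \<subseteq> graph_ball V E v (2 * r - 1) \<inter> {y. \<not> graph_dist_is E y x d}"
proof -
  obtain z where "graph_dist_is E v z r" and zx: "walk E z x (d - r)"
    using graph_dist_is_split[OF vx r(2)] .
  then have vz: "walk E v z r" by (simp add: graph_dist_is_def)
  have sym: "\<And>u w. E u w \<Longrightarrow> E w u" using G by (simp add: is_graph_def)
  have "y \<in> graph_ball V E v (2 * r - 1) \<and> \<not> graph_dist_is E y x d"
    if "y \<in> graph_ball V E z (r - 1)" for y
  proof -
    from that obtain k where yV: "y \<in> V" and k: "k \<le> r - 1" and zy: "walk E z y k"
      by (auto simp: graph_ball_def)
    have "walk E v y (r + k)" using walk_append[OF vz zy] .
    with yV k r have "y \<in> graph_ball V E v (2 * r - 1)"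
      by (auto simp: graph_ball_def intro!: exI[of _ "r + k"])
    moreover have "walk E y x (k + (d - r))"
      using walk_append[OF walk_reverse[OF sym zy] zx] .
    then have "\<not> graph_dist_is E y x d"
      by (rule walk_shorter_not_graph_dist) (use k r in simp)
    ultimately show ?thesis by simp
  qed
  with walk_in_vertices[OF G vz v] show thesis using that by blast
qed

text \<open>Each vertex \<open>x\<close> far from \<open>v\<close> is near the \<open>m\<close> or more vertices of a ball inside
  \<open>B = graph_ball V E v (2r - 1)\<close>, while each vertex of \<open>B\<close> is near at most \<open>\<beta>\<close> vertices.\<close>
lemma card_graph_ball_doubling:
  fixes \<sigma> \<beta> m :: real
  assumes G: "is_graph V E"
    and near: "\<forall>y\<in>V. real (card {w\<in>V. \<not> graph_dist_is E y w d}) \<le> \<beta>"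
    and far: "\<forall>v\<in>V. \<sigma> \<le> real (card {x\<in>V. graph_dist_is E v x d})"
    and balls: "\<forall>z\<in>V. m \<le> real (card (graph_ball V E z (r - 1)))" and "m \<ge> 0"
    and r: "1 \<le> r" "r \<le> d" and v: "v \<in> V"
  shows "\<sigma> * m \<le> \<beta> * real (card (graph_ball V E v (2 * r - 1)))"
proof -
  have fin: "finite V" using G by (simp add: is_graph_def)
  define B where "B = graph_ball V E v (2 * r - 1)"
  define F where "F = {x\<in>V. graph_dist_is E v x d}"
  have fB: "finite B" unfolding B_def by (rule finite_subset[OF graph_ball_subset fin])
  have fF: "finite F" using fin by (simp add: F_def)
  let ?near = "\<lambda>y x. of_bool (\<not> graph_dist_is E y x d) :: real"
  have "real (card F) * m = (\<Sum>x\<in>F. m)" by simp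
  also have "\<dots> \<le> (\<Sum>x\<in>F. \<Sum>y\<in>B. ?near y x)"
  proof (rule sum_mono)
    fix x assume "x \<in> F"
    then obtain z where "z \<in> V"
      and sub: "graph_ball V E z (r - 1) \<subseteq> B \<inter> {y. \<not> graph_dist_is E y x d}"
      using obtain_graph_ball_subset_near[OF G v _ r] by (auto simp: F_def B_def)
    then have "m \<le> real (card (graph_ball V E z (r - 1)))" using balls by blast
    also have "\<dots> \<le> real (card (B \<inter> {y. \<not> graph_dist_is E y x d}))"
      using sub fB by (simp add: card_mono)
    also have "\<dots> = (\<Sum>y\<in>B. ?near y x)" using fB by simp
    finally show "m \<le> (\<Sum>y\<in>B. ?near y x)" .
  qed
  also have "\<dots> = (\<Sum>y\<in>B. \<Sum>x\<in>F. ?near y x)" by (rule sum.swap)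
  also have "\<dots> \<le> (\<Sum>y\<in>B. \<beta>)"
  proof (rule sum_mono)
    fix y assume "y \<in> B"
    then have "y \<in> V" unfolding B_def by (rule subsetD[OF graph_ball_subset])
    have "(\<Sum>x\<in>F. ?near y x) = real (card (F \<inter> {x. \<not> graph_dist_is E y x d}))"
      using fF by simp
    also have "\<dots> \<le> real (card {w\<in>V. \<not> graph_dist_is E y w d})"
      using fin by (auto intro!: card_mono simp: F_def)
    also have "\<dots> \<le> \<beta>" using near \<open>y \<in> V\<close> by blast
    finally show "(\<Sum>x\<in>F. ?near y x) \<le> \<beta>" .
  qed
  finally have "real (card F) * m \<le> \<beta> * real (card B)" by (simp add: mult.commute)
  moreover have "\<sigma> * m \<le> real (card F) * m"
    using far v \<open>m \<ge> 0\<close> by (auto simp: F_def intro: mult_right_mono)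
  ultimately show ?thesis by (simp add: B_def)
qed

lemma card_graph_ball_ge_power:
  fixes \<sigma> \<beta> q :: real
  assumes G: "is_graph V E"
    and near: "\<forall>y\<in>V. real (card {w\<in>V. \<not> graph_dist_is E y w d}) \<le> \<beta>"
    and far: "\<forall>v\<in>V. \<sigma> \<le> real (card {x\<in>V. graph_dist_is E v x d})"
    and "q > 0" "\<beta> > 0" "q * \<beta> \<le> \<sigma>"
  shows "2 ^ k \<le> 2 * d \<Longrightarrow> \<forall>v\<in>V. q ^ k \<le> real (card (graph_ball V E v (2 ^ k - 1)))"
proof (induction k)
  case 0
  have "finite V" using G by (simp add: is_graph_def)
  then have "v \<in> V \<Longrightarrow> 1 \<le> card (graph_ball V E v 0)" for v
    using center_in_graph_ball graph_ball_subset
    by (metis One_nat_def Suc_leI card_gt_0_iff empty_iff finite_subset)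
  then show ?case by simp
next
  case (Suc k)
  show ?case
  proof
    fix v assume v: "v \<in> V"
    have "\<sigma> * q ^ k \<le> \<beta> * real (card (graph_ball V E v (2 * 2 ^ k - 1)))"
      using Suc card_graph_ball_doubling[OF G near far, of "q ^ k" "2 ^ k" v] \<open>q > 0\<close> v
      by simp
    moreover have "q ^ Suc k * \<beta> \<le> \<sigma> * q ^ k"
      using \<open>q * \<beta> \<le> \<sigma>\<close> \<open>q > 0\<close> mult_right_mono[of "q * \<beta>" \<sigma> "q ^ k"]
      by (simp add: algebra_simps)
    ultimately have "q ^ Suc k * \<beta> \<le> real (card (graph_ball V E v (2 * 2 ^ k - 1))) * \<beta>"
      by (simp add: mult.commute)
    then show "q ^ Suc k \<le> real (card (graph_ball V E v (2 ^ Suc k - 1)))"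
      using \<open>\<beta> > 0\<close> by simp
  qed
qed

lemma power_le_imp_le_ln_div:
  fixes q N :: real
  assumes "1 < q" "q ^ k \<le> N"
  shows "real k \<le> ln N / ln q"
proof -
  have "0 < q ^ k" using assms(1) by simp
  then have "ln (q ^ k) \<le> ln N" using assms(2) by simp
  then have "real k * ln q \<le> ln N" using assms(1) by (simp add: ln_realpow)
  then show ?thesis using assms(1) by (simp add: pos_le_divide_eq)
qed

lemma ln_inverse_le_three_ln_quarter_inverse:
  fixes \<epsilon> :: real
  assumes "0 < \<epsilon>" "\<epsilon> < 1/8"
  shows "ln (1 / \<epsilon>) \<le> 3 * ln (1 / (4 * \<epsilon>))"
proof -
  have "ln (1 / (4 * \<epsilon>)) = ln (1 / \<epsilon>) - 2 * ln 2"
    using assms ln_realpow[of 2 2] by (simp add: ln_div ln_mult)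
  moreover have "ln 8 < ln (1 / \<epsilon>)" using assms by (simp add: field_simps)
  moreover have "ln (8 :: real) = 3 * ln 2" using ln_realpow[of 2 3] by simp
  ultimately show ?thesis by linarith
qed

lemma le_two_powr_three_ln_div_ln_inverse:
  fixes \<epsilon> n :: real
  assumes "1/8 \<le> \<epsilon>" "\<epsilon> < 1" "1 \<le> n"
  shows "n \<le> 2 powr (3 * ln n / ln (1 / \<epsilon>))"
proof -
  have "ln (1 / \<epsilon>) \<le> ln 8" using assms by (simp add: field_simps)
  also have "ln (8 :: real) = 3 * ln 2" using ln_realpow[of 2 3] by simp
  finally have "ln (1 / \<epsilon>) \<le> 3 * ln 2" .
  moreover have "0 < ln (1 / \<epsilon>)" "0 \<le> ln n" using assms by auto
  ultimately have "ln n / ln 2 \<le> 3 * ln n / ln (1 / \<epsilon>)"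
    using divide_left_mono[of "ln (1 / \<epsilon>)" "3 * ln 2" "3 * ln n"] by simp
  then have "log 2 n \<le> 3 * ln n / ln (1 / \<epsilon>)" by (simp add: log_def)
  then show ?thesis
    using powr_mono[of "log 2 n" _ 2] assms(3) by simp
qed

lemma distance_uniform_card_near:
  assumes G: "is_graph V E" and DU: "distance_uniform V E \<epsilon> d" and v: "v \<in> V"
  shows "real (card {w\<in>V. \<not> graph_dist_is E v w d}) \<le> \<epsilon> * real (card V) + 1"
proof -
  let ?near = "{w \<in> V - {v}. \<not> graph_dist_is E v w d}"
  have fin: "finite ?near" using G by (simp add: is_graph_def)
  have "{w\<in>V. \<not> graph_dist_is E v w d} \<subseteq> insert v ?near" by auto
  then have "card {w\<in>V. \<not> graph_dist_is E v w d} \<le> card (insert v ?near)"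
    using fin by (intro card_mono) auto
  also have "\<dots> \<le> card ?near + 1" using fin by (simp add: card_insert_if)
  moreover have "real (card ?near) \<le> \<epsilon> * real (card V)"
    using DU v unfolding distance_uniform_def by blast
  ultimately show ?thesis by linarith
qed

lemma distance_uniform_card_far:
  assumes G: "is_graph V E" and DU: "distance_uniform V E \<epsilon> d" and v: "v \<in> V"
  shows "real (card V) - 1 - \<epsilon> * real (card V) \<le> real (card {w \<in> V - {v}. graph_dist_is E v w d})"
proof -
  have fin: "finite V" using G by (simp add: is_graph_def)
  let ?far = "{w \<in> V - {v}. graph_dist_is E v w d}"
  let ?near = "{w \<in> V - {v}. \<not> graph_dist_is E v w d}"
  have "card (V - {v}) = card (?far \<union> ?near)" by (rule arg_cong[where f = card]) auto
  also have "\<dots> = card ?far + card ?near" by (rule card_Un_disjoint) (use fin in auto)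
  finally have "card V = Suc (card ?far + card ?near)"
    using card.remove[OF fin v] by simp
  then have "real (card V) = real (card ?far) + real (card ?near) + 1" by simp
  moreover have "real (card ?near) \<le> \<epsilon> * real (card V)"
    using DU v unfolding distance_uniform_def by blast
  ultimately show ?thesis by linarith
qed

lemma distance_uniform_obtain_far_pair:
  assumes G: "is_graph V E" and DU: "distance_uniform V E \<epsilon> d"
    and en: "\<epsilon> * real (card V) < real (card V) - 1"
  obtains v x where "v \<in> V" "x \<noteq> v" "graph_dist_is E v x d"
proof -
  have "card V \<noteq> 0" by (rule notI) (use en in simp)
  then obtain v where v: "v \<in> V" by (metis card.empty ex_in_conv)
  have "real (card {w \<in> V - {v}. graph_dist_is E v w d}) > 0"
    using distance_uniform_card_far[OF G DU v] en by linarith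
  then have "{w \<in> V - {v}. graph_dist_is E v w d} \<noteq> {}"
    by (metis card.empty less_irrefl of_nat_0)
  with v show thesis using that by blast
qed

lemma distance_uniform_critical_distance_le_one:
  assumes G: "is_graph V E" and DU: "distance_uniform V E \<epsilon> d"
    and small: "\<epsilon> * real (card V) < 1"
    and v: "v \<in> V" and x: "x \<noteq> v" and vx: "graph_dist_is E v x d"
  shows "d \<le> 1"
proof -
  let ?near = "{w \<in> V - {v}. \<not> graph_dist_is E v w d}"
  obtain w where vw: "graph_dist_is E v w 1"
    by (rule graph_dist_is_split[OF vx graph_dist_is_pos[OF vx x]])
  then have "E v w" unfolding graph_dist_is_def walk_one_iff by blast
  then have "w \<in> V - {v}" using G by (auto simp: is_graph_def)
  have "real (card ?near) \<le> \<epsilon> * real (card V)"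
    using DU v unfolding distance_uniform_def by blast
  with small have "card ?near = 0" by linarith
  moreover have "finite ?near" using G by (simp add: is_graph_def)
  ultimately have "?near = {}" by simp
  with \<open>w \<in> V - {v}\<close> have "graph_dist_is E v w d" by blast
  then show ?thesis using graph_dist_is_unique[OF vw] by simp
qed

lemma distance_uniform_critical_distance_less_powr:
  assumes G: "is_graph V E" and DU: "distance_uniform V E \<epsilon> d"
    and eps: "0 < \<epsilon>" "\<epsilon> < 1/8" and large: "1 \<le> \<epsilon> * real (card V)"
    and v: "v \<in> V" and d: "d \<ge> 1"
  shows "real d < 2 powr (3 * ln (real (card V)) / ln (1 / \<epsilon>))"
proof -
  define n where "n = real (card V)"
  define q where "q = 1 / (4 * \<epsilon>)"
  have fin: "finite V" using G by (simp add: is_graph_def)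
  have "1 \<le> n" using large eps mult_right_mono[of \<epsilon> 1 n] by (simp add: n_def)
  have "q > 1" using eps by (simp add: q_def)
  have "q * (\<epsilon> * n + 1) \<le> q * (2 * \<epsilon> * n)"
    using large \<open>q > 1\<close> by (simp add: n_def)
  also have "\<dots> = n / 2" using eps by (simp add: q_def)
  also have "\<dots> \<le> n - 1 - \<epsilon> * n"
    using eps large mult_right_mono[of \<epsilon> "1/8" n] by (simp add: n_def)
  finally have q_le: "q * (\<epsilon> * n + 1) \<le> n - 1 - \<epsilon> * n" .
  have near: "\<forall>y\<in>V. real (card {w\<in>V. \<not> graph_dist_is E y w d}) \<le> \<epsilon> * n + 1"
    using distance_uniform_card_near[OF G DU] by (simp add: n_def)
  have far: "\<forall>y\<in>V. n - 1 - \<epsilon> * n \<le> real (card {x\<in>V. graph_dist_is E y x d})"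
  proof
    fix y assume "y \<in> V"
    have "card {w \<in> V - {y}. graph_dist_is E y w d} \<le> card {x\<in>V. graph_dist_is E y x d}"
      using fin by (intro card_mono) auto
    then show "n - 1 - \<epsilon> * n \<le> real (card {x\<in>V. graph_dist_is E y x d})"
      using distance_uniform_card_far[OF G DU \<open>y \<in> V\<close>] by (simp add: n_def)
  qed
  obtain k where k: "2 ^ k \<le> d" "d < 2 ^ (k + 1)" using ex_power_ivl1[of 2 d] d by auto
  have \<beta>_pos: "0 < \<epsilon> * n + 1" using large by (simp add: n_def)
  have "2 ^ (k + 1) \<le> 2 * d" using k(1) by simp
  have "\<forall>w\<in>V. q ^ (k + 1) \<le> real (card (graph_ball V E w (2 ^ (k + 1) - 1)))"
    by (rule card_graph_ball_ge_power[OF G near far _ \<beta>_pos q_le \<open>2 ^ (k + 1) \<le> 2 * d\<close>])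
      (use \<open>q > 1\<close> in simp)
  then have "q ^ (k + 1) \<le> real (card (graph_ball V E v (2 ^ (k + 1) - 1)))" using v by blast
  also have "\<dots> \<le> n" using card_mono[OF fin graph_ball_subset] by (simp add: n_def)
  finally have "real (k + 1) \<le> ln n / ln q"
    by (rule power_le_imp_le_ln_div[OF \<open>q > 1\<close>])
  also have "\<dots> \<le> 3 * ln n / (3 * ln q)" by simp
  also have "\<dots> \<le> 3 * ln n / ln (1 / \<epsilon>)"
    using ln_inverse_le_three_ln_quarter_inverse[OF eps] \<open>1 \<le> n\<close> eps
    by (intro divide_left_mono) (auto simp: q_def)
  finally have exponent: "real (k + 1) \<le> 3 * ln n / ln (1 / \<epsilon>)" .
  have "real d < 2 ^ (k + 1)"
    using of_nat_less_iff[where 'a = real, THEN iffD2, OF k(2)] by simp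
  also have "\<dots> = 2 powr real (k + 1)" by (simp only: powr_realpow zero_less_numeral)
  also have "\<dots> \<le> 2 powr (3 * ln n / ln (1 / \<epsilon>))" using exponent by (rule powr_mono) simp
  finally show ?thesis by (simp add: n_def)
qed

theorem theorem1:
  shows "\<exists>C::real. C > 0 \<and>
    (\<forall>(V :: nat set) E (\<epsilon>::real) (d::nat).
       is_graph V E \<longrightarrow> \<epsilon> > 0 \<longrightarrow> \<epsilon> * real (card V) < real (card V) - 1 \<longrightarrow>
       distance_uniform V E \<epsilon> d \<longrightarrow>
       real d \<le> 2 powr (C * ln (real (card V)) / ln (1 / \<epsilon>)))"
proof (intro exI[of _ 3] conjI allI impI)
  fix V :: "nat set" and E and \<epsilon> :: real and d :: nat
  assume G: "is_graph V E" and eps: "\<epsilon> > 0" and en: "\<epsilon> * real (card V) < real (card V) - 1"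
    and DU: "distance_uniform V E \<epsilon> d"
  let ?bound = "2 powr (3 * ln (real (card V)) / ln (1 / \<epsilon>))"
  obtain v x where v: "v \<in> V" and "x \<noteq> v" and vx: "graph_dist_is E v x d"
    using distance_uniform_obtain_far_pair[OF G DU en] .
  have "card V > 0" using G v by (auto simp: is_graph_def card_gt_0_iff)
  then have "\<epsilon> * real (card V) < 1 * real (card V)" using en by linarith
  then have "\<epsilon> < 1" by (rule mult_right_less_imp_less) simp
  consider "\<epsilon> * real (card V) < 1" | "1/8 \<le> \<epsilon>" | "\<epsilon> < 1/8" "1 \<le> \<epsilon> * real (card V)"
    by linarith
  then show "real d \<le> ?bound"
  proof cases
    case 1
    then have "d \<le> 1"
      using distance_uniform_critical_distance_le_one[OF G DU _ v \<open>x \<noteq> v\<close> vx] by simp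
    moreover have "1 \<le> ?bound"
      using \<open>\<epsilon> < 1\<close> eps \<open>card V > 0\<close> by (intro ge_one_powr_ge_zero) auto
    ultimately show ?thesis by simp
  next
    case 2
    have "real d \<le> real (card V)" using graph_dist_less_card[OF G v vx] by simp
    also have "\<dots> \<le> ?bound"
      using le_two_powr_three_ln_div_ln_inverse[OF 2 \<open>\<epsilon> < 1\<close>] \<open>card V > 0\<close> by simp
    finally show ?thesis .
  next
    case 3
    with graph_dist_is_pos[OF vx \<open>x \<noteq> v\<close>] show ?thesis
      using distance_uniform_critical_distance_less_powr[OF G DU eps(1) _ _ v] by simp
  qed
qed simp

end
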